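(* Let $J\subseteq S$ and $s\in S$. (1) If $s\in J$, then $t_s\tau^+_J$ reduces to $q\tau^-_J$ and $t_s\tau^-_J$ reduces to $\tau^+_J$ modulo $G_q(\emptyset)$. (2) If $s\notin J$ and $J'=\{j\in J\mid j<s\}$, then modulo $G_q(\emptyset)$, $t_s\tau^+_J$ reduces to $(-1)^{\#J'}\tau^+_{J\cup\{s\}}+q\tau^-_J$ and $t_s\tau^-_J$ reduces to $(-1)^{\#J'-1}\tau^-_{J\cup\{s\}}+\tau^+_J$.
   Context: $S$ is a finite set with a total order $<$, $R$ a commutative ring with $1$, $q\in R$, $A=R\langle t_s\mid s\in S\rangle$. For $J=\{j_1<\dots<j_{\#J}\}$, $t_J=t_{j_1}\cdots t_{j_{\#J}}$; for $I=\{j_{\alpha_1}<\dots<j_{\alpha_{\#I}}\}\subseteq J$, $\ell_J(I)=\sum_\nu(\alpha_\nu-\nu)$; $\tau^-_J=\sum_{I\subseteq J,\ \#I\text{ odd}}(-1)^{\ell_J(I)}(-q)^{(\#I-1)/2}t_{J\setminus I}$, $\tau^+_J=\sum_{I\subseteq J,\ \#I\text{ even}}(-1)^{\ell_J(I)}(-q)^{\#I/2}t_{J\setminus I}$. $G_q(\emptyset)=\{t_s^2-q: s\in S\}\cup\{t_rt_s+t_st_r-2q: r,s\in S,\ s<r\}$; the leading monomials of these are $t_s^2$ and $t_rt_s$ ($s<r$) w.r.t. the degree lexicographic order (words compared by length, then lexicographically from the left). For a set $\mathcal I$ of elements of $A$ with leading coefficient $1$, a reduction of $f\in A$ modulo $\mathcal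 I$ is obtained by choosing $g\in\mathcal I$ with leading monomial $m$ and a monomial $umv$ of $f$ (with coefficient $c$) and replacing $c\,umv$ by $c\,u(m-g)v$; $f$ reduces to $h$ modulo $\mathcal I$ if there is a finite sequence $f=f_0,f_1,\dots,f_k=h$ ($k\ge0$) with each $f_{i+1}$ a reduction of $f_i$. *)

theory Defs
  imports Main
begin

text \<open>The finite totally ordered set S is the
type 'a :: {linorder, finite}. Words over S are lists; an element of the algebra
is represented by its coefficient function on words (all elements used below
have finite support).\<close>

type_synonym ('a, 'r) falg = "'a list \<Rightarrow> 'r"

definition mono :: "'a list \<Rightarrow> ('a, 'r::comm_ring_1) falg" where
  "mono u = (\<lambda>w. if w = u then 1 else 0)"

definition gen :: "'a \<Rightarrow> ('a, 'r::comm_ring_1) falg" where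
  "gen s = mono [s]"

definition fadd :: "('a, 'r::comm_ring_1) falg \<Rightarrow> ('a, 'r) falg \<Rightarrow> ('a, 'r) falg" where
  "fadd f g = (\<lambda>w. f w + g w)"

definition fsub :: "('a, 'r::comm_ring_1) falg \<Rightarrow> ('a, 'r) falg \<Rightarrow> ('a, 'r) falg" where
  "fsub f g = (\<lambda>w. f w - g w)"

definition smul :: "'r::comm_ring_1 \<Rightarrow> ('a, 'r) falg \<Rightarrow> ('a, 'r) falg" where
  "smul c f = (\<lambda>w. c * f w)"

definition fmul :: "('a, 'r::comm_ring_1) falg \<Rightarrow> ('a, 'r) falg \<Rightarrow> ('a, 'r) falg" where
  "fmul f g = (\<lambda>w. \<Sum>i\<le>length w. f (take i w) * g (drop i w))"

definition tset :: "'a::{linorder,finite} set \<Rightarrow> ('a, 'r::comm_ring_1) falg" where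
  "tset J = mono (sorted_list_of_set J)"

text \<open>ell_J(I) = sum_nu (alpha_nu - nu); alpha_nu - 1 (the 0-based position of the
nu-th element x of I inside J) is card {y in J. y < x}.\<close>
definition ell :: "'a::{linorder,finite} set \<Rightarrow> 'a set \<Rightarrow> nat" where
  "ell J I = (\<Sum>\<nu><card I. card {y\<in>J. y < sorted_list_of_set I ! \<nu>} - \<nu>)"

definition tau_minus :: "'r::comm_ring_1 \<Rightarrow> 'a::{linorder,finite} set \<Rightarrow> ('a, 'r) falg" where
  "tau_minus q J = (\<lambda>w. \<Sum>I\<in>{I. I \<subseteq> J \<and> odd (card I)}.
       (-1) ^ ell J I * (-q) ^ ((card I - 1) div 2) * tset (J - I) w)"

definition tau_plus :: "'r::comm_ring_1 \<Rightarrow> 'a::{linorder,finite} set \<Rightarrow> ('a, 'r) falg" where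
  "tau_plus q J = (\<lambda>w. \<Sum>I\<in>{I. I \<subseteq> J \<and> even (card I)}.
       (-1) ^ ell J I * (-q) ^ (card I div 2) * tset (J - I) w)"

definition deglex_less :: "'a::linorder list \<Rightarrow> 'a list \<Rightarrow> bool" where
  "deglex_less v w \<longleftrightarrow> length v < length w \<or>
     (length v = length w \<and> (\<exists>p a b x y. v = p @ a # x \<and> w = p @ b # y \<and> a < b))"

definition is_lm :: "('a::linorder, 'r::comm_ring_1) falg \<Rightarrow> 'a list \<Rightarrow> bool" where
  "is_lm g m \<longleftrightarrow> g m = 1 \<and> (\<forall>w. g w \<noteq> 0 \<longrightarrow> w = m \<or> deglex_less w m)"

definition Gq :: "'r::comm_ring_1 \<Rightarrow> ('a::{linorder,finite}, 'r) falg set" where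
  "Gq q = {fsub (mono [s, s]) (smul q (mono [])) | s. True}
        \<union> {fsub (fadd (mono [r, s]) (mono [s, r])) (smul (2 * q) (mono [])) | r s. s < r}"

text \<open>One reduction step: replace c*umv by c*u(m-g)v, i.e. subtract c*u g v.\<close>
definition red_step :: "('a::linorder, 'r::comm_ring_1) falg set \<Rightarrow> ('a, 'r) falg \<Rightarrow> ('a, 'r) falg \<Rightarrow> bool" where
  "red_step I f h \<longleftrightarrow> (\<exists>g\<in>I. \<exists>m u v. is_lm g m \<and> f (u @ m @ v) \<noteq> 0 \<and>
      h = fsub f (smul (f (u @ m @ v)) (fmul (fmul (mono u) g) (mono v))))"

definition reduces :: "('a::linorder, 'r::comm_ring_1) falg set \<Rightarrow> ('a, 'r) falg \<Rightarrow> ('a, 'r) falg \<Rightarrow> bool" where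
  "reduces I = (red_step I)\<^sup>*\<^sup>*"

end

theory Submission
  imports Defs "HOL-Library.Multiset"
begin

text \<open>Let the free algebra act on the exterior algebra over S, whose elements are modelled as
  functions on subsets of S, by letting t_a act as e_a wedge (-) + q c, where c is contraction with
  the covector taking the value 1 on every e_k. Then t_a t_a and t_a t_b + t_b t_a act as q and 2q,
  so the elements of G_q act as 0 and no reduction changes the image of the empty basis vector e_0.
  Reduction modulo G_q terminates in an element supported on strictly increasing words, and such
  an element is determined by its image of e_0, because a strictly increasing word with letter
  set K sends e_0 to e_K plus terms on smaller sets. Finally tau^+_J and tau^-_J send e_0 to e_J
  and c e_J, so in each claimed reduction both sides have the same image of e_0.\<close>

section \<open>A Clifford representation on the exterior algebra\<close>

definition ext_sign :: "'a::linorder set \<Rightarrow> 'a \<Rightarrow> 'r::comm_ring_1" where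
  "ext_sign K a = (-1) ^ card {k\<in>K. k < a}"

definition wedge :: "'a::{linorder,finite} \<Rightarrow> ('a set \<Rightarrow> 'r::comm_ring_1) \<Rightarrow> 'a set \<Rightarrow> 'r" where
  "wedge a X = (\<lambda>K. if a \<in> K then ext_sign K a * X (K - {a}) else 0)"

definition contract :: "('a::{linorder,finite} set \<Rightarrow> 'r::comm_ring_1) \<Rightarrow> 'a set \<Rightarrow> 'r" where
  "contract X = (\<lambda>K. \<Sum>k\<in>-K. ext_sign K k * X (insert k K))"

lemma ext_sign_insert:
  assumes "(k::'a::{linorder,finite}) \<notin> K"
  shows "ext_sign (insert k K) l = (if k < l then - ext_sign K l else (ext_sign K l :: 'r::comm_ring_1))"
proof (cases "k < l")
  case True
  then have "{x\<in>insert k K. x < l} = insert k {x\<in>K. x < l}" by auto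
  with True assms show ?thesis by (simp add: ext_sign_def)
next
  case False
  then have "{x\<in>insert k K. x < l} = {x\<in>K. x < l}" by auto
  with False show ?thesis by (simp add: ext_sign_def)
qed

lemma ext_sign_remove:
  assumes "(a::'a::{linorder,finite}) \<in> K"
  shows "ext_sign (K - {a}) l = (if a < l then - ext_sign K l else (ext_sign K l :: 'r::comm_ring_1))"
proof -
  have "ext_sign K l = (if a < l then - ext_sign (K - {a}) l else (ext_sign (K - {a}) l :: 'r))"
    using ext_sign_insert[of a "K - {a}" l] assms by (simp add: insert_absorb)
  then show ?thesis by simp
qed

lemma ext_sign_insert_self: "ext_sign (insert a K) (a::'a::linorder) = ext_sign K a"
  unfolding ext_sign_def by (rule arg_cong[where f="\<lambda>K. (-1) ^ card K"]) auto

lemma ext_sign_min: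
  assumes "\<forall>x\<in>J. (a::'a::linorder) < x"
  shows "ext_sign (insert a J) a = 1"
proof -
  have "{k \<in> insert a J. k < a} = {}" using assms by auto
  then show ?thesis unfolding ext_sign_def by (simp only: card.empty power_0)
qed

lemma ext_sign_square [simp]: "ext_sign K a * ext_sign K a = (1::'r::comm_ring_1)"
  by (simp add: ext_sign_def flip: power_add)

lemma wedge_wedge: "wedge a (wedge a X) K = 0"
  by (simp add: wedge_def)

lemma wedge_anticomm:
  assumes "a \<noteq> b"
  shows "wedge a (wedge b X) K + wedge b (wedge a X) K = (0::'r::comm_ring_1)"
proof (cases "a \<in> K \<and> b \<in> K")
  case True
  have "ext_sign K a * ext_sign (K - {a}) b + ext_sign K b * ext_sign (K - {b}) a = (0::'r)"
    using True assms by (cases "a < b") (auto simp: ext_sign_remove)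
  moreover have "K - {a} - {b} = K - {b} - {a}" by auto
  ultimately show ?thesis
    using True assms by (simp add: wedge_def mult.assoc[symmetric] distrib_right[symmetric])
next
  case False
  then show ?thesis by (auto simp: wedge_def)
qed

text \<open>The contraction is with the covector that is 1 on every basis vector, so it pairs to 1
  with each e_a; hence its anticommutator with a wedge is the identity.\<close>
lemma wedge_contract: "wedge a (contract X) K + contract (wedge a X) K = (X K :: 'r::comm_ring_1)"
proof (cases "a \<in> K")
  case True
  have c: "- (K - {a}) = insert a (-K)" and aK: "a \<notin> -K" and iK: "insert a (K - {a}) = K"
    using True by auto
  have "wedge a (contract X) K
      = ext_sign K a * ext_sign K a * X K + (\<Sum>k\<in>-K. ext_sign K a * ext_sign (K - {a}) k * X (insert k (K - {a})))"
    using True aK by (simp add: wedge_def contract_def c iK insert_absorb ext_sign_remove sum_distrib_left algebra_simps)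
  moreover have "contract (wedge a X) K = (\<Sum>k\<in>-K. ext_sign K k * ext_sign (insert k K) a * X (insert k (K - {a})))"
    unfolding contract_def wedge_def using True by (intro sum.cong refl) (auto simp: insert_Diff_if)
  moreover have "ext_sign K a * ext_sign (K - {a}) k + ext_sign K k * ext_sign (insert k K) a = (0::'r)"
    if "k \<in> -K" for k
    using that True by (cases "a < k") (auto simp: ext_sign_remove ext_sign_insert)
  ultimately show ?thesis
    by (simp add: add.assoc flip: sum.distrib distrib_right)
next
  case False
  have "contract (wedge a X) K = (\<Sum>k\<in>-K. if k = a then X K else 0)"
    unfolding contract_def wedge_def using False
    by (intro sum.cong refl) (auto simp: ext_sign_insert_self mult.assoc[symmetric])
  with False show ?thesis by (simp add: wedge_def)
qed

lemma ext_sign_swap: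
  assumes "(k::'a::{linorder,finite}) \<notin> K" "l \<notin> K" "k \<noteq> l"
  shows "ext_sign K k * ext_sign (insert k K) l + ext_sign K l * ext_sign (insert l K) k = (0::'r::comm_ring_1)"
  using assms by (cases "k < l") (auto simp: ext_sign_insert algebra_simps)

lemma contract_contract: "contract (contract X) K = (0::'r::comm_ring_1)"
proof -
  define F where "F k l = ext_sign K k * ext_sign (insert k K) l * X (insert l (insert k K))" for k l
  have "ext_sign K k * contract X (insert k K) = (\<Sum>l\<in>-K. if k \<noteq> l then F k l else 0)"
    if "k \<in> -K" for k
  proof -
    have "- insert k K = {l\<in>-K. k \<noteq> l}" using that by auto
    then have "contract X (insert k K)
        = (\<Sum>l\<in>-K. if k \<noteq> l then ext_sign (insert k K) l * X (insert l (insert k K)) else 0)"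
      unfolding contract_def by (simp only: sum.inter_filter[OF finite])
    then show ?thesis by (simp add: F_def sum_distrib_left mult.assoc if_distrib cong: if_cong)
  qed
  then have "contract (contract X) K = (\<Sum>k\<in>-K. \<Sum>l\<in>-K. if k \<noteq> l then F k l else 0)"
    by (simp add: contract_def[of "contract X"])
  also have "\<dots> = (\<Sum>k\<in>-K. \<Sum>l\<in>-K. (if k < l then F k l else 0) + (if l < k then F k l else 0))"
    by (intro sum.cong refl) (auto simp: neq_iff)
  also have "\<dots> = (\<Sum>k\<in>-K. \<Sum>l\<in>-K. if k < l then F k l else 0)
      + (\<Sum>k\<in>-K. \<Sum>l\<in>-K. if l < k then F k l else 0)"
    by (simp add: sum.distrib)
  also have "(\<Sum>k\<in>-K. \<Sum>l\<in>-K. if l < k then F k l else 0)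
      = (\<Sum>k\<in>-K. \<Sum>l\<in>-K. if k < l then F l k else 0)"
    by (rule sum.swap)
  also have "(\<Sum>k\<in>-K. \<Sum>l\<in>-K. if k < l then F k l else 0) + \<dots>
      = (\<Sum>k\<in>-K. \<Sum>l\<in>-K. if k < l then F k l + F l k else 0)"
    unfolding sum.distrib[symmetric] by (intro sum.cong refl) simp
  also have "\<dots> = 0"
  proof (intro sum.neutral ballI)
    fix k l assume "k \<in> -K" "l \<in> -K"
    then show "(if k < l then F k l + F l k else 0) = 0"
      using ext_sign_swap[of k K l, where 'r='r] less_imp_neq[of k l]
      by (simp add: F_def insert_commute[of l k] mult.assoc[symmetric] distrib_right[symmetric])
  qed
  finally show ?thesis .
qed

lemma wedge_add: "wedge a (\<lambda>K. X K + Y K) K = wedge a X K + wedge a Y K"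
  by (simp add: wedge_def algebra_simps)

lemma wedge_smult: "wedge a (\<lambda>K. c * X K) K = c * wedge a X K"
  by (simp add: wedge_def algebra_simps)

lemma wedge_sum: "wedge a (\<lambda>K. \<Sum>i\<in>A. c i * Y i K) K = (\<Sum>i\<in>A. c i * wedge a (Y i) K)"
  by (simp add: wedge_def algebra_simps sum_distrib_left)

lemma contract_add: "contract (\<lambda>K. X K + Y K) K = contract X K + contract Y K"
  by (simp add: contract_def algebra_simps sum.distrib)

lemma contract_smult: "contract (\<lambda>K. c * X K) K = c * contract X K"
  by (simp add: contract_def algebra_simps sum_distrib_left)

lemma contract_sum: "contract (\<lambda>K. \<Sum>i\<in>A. c i * Y i K) K = (\<Sum>i\<in>A. c i * contract (Y i) K)"
  unfolding contract_def by (simp add: sum_distrib_left algebra_simps) (rule sum.swap)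

definition clifford :: "'r::comm_ring_1 \<Rightarrow> 'a::{linorder,finite} \<Rightarrow> ('a set \<Rightarrow> 'r) \<Rightarrow> 'a set \<Rightarrow> 'r" where
  "clifford q a X = (\<lambda>K. wedge a X K + q * contract X K)"

lemma clifford_sum: "clifford q a (\<lambda>K. \<Sum>i\<in>A. c i * Y i K) K = (\<Sum>i\<in>A. c i * clifford q a (Y i) K)"
  by (simp add: clifford_def wedge_sum contract_sum algebra_simps sum.distrib sum_distrib_left)

lemma clifford_square: "clifford q a (clifford q a X) K = q * X K"
proof -
  have "clifford q a (clifford q a X) K
      = wedge a (wedge a X) K + q * (wedge a (contract X) K + contract (wedge a X) K) + q * q * contract (contract X) K"
    by (simp add: clifford_def wedge_add wedge_smult contract_add contract_smult algebra_simps)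
  then show ?thesis by (simp add: wedge_wedge wedge_contract contract_contract)
qed

lemma clifford_anticomm:
  assumes "a \<noteq> b"
  shows "clifford q a (clifford q b X) K + clifford q b (clifford q a X) K = 2 * q * X K"
proof -
  have "clifford q a (clifford q b X) K + clifford q b (clifford q a X) K
      = (wedge a (wedge b X) K + wedge b (wedge a X) K) + q * (wedge a (contract X) K + contract (wedge a X) K)
        + q * (wedge b (contract X) K + contract (wedge b X) K) + 2 * q * q * contract (contract X) K"
    by (simp add: clifford_def wedge_add wedge_smult contract_add contract_smult algebra_simps)
  also have "\<dots> = 0 + q * X K + q * X K + 2 * q * q * 0"
    by (simp only: wedge_anticomm[OF assms] wedge_contract contract_contract)
  finally show ?thesis by (simp add: algebra_simps)
qed

lemma clifford_contract: "clifford q a (contract X) K = X K - contract (wedge a X) K"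
  using wedge_contract[of a X K] by (simp add: clifford_def contract_contract algebra_simps)

primrec word_act :: "'r::comm_ring_1 \<Rightarrow> 'a::{linorder,finite} list \<Rightarrow> ('a set \<Rightarrow> 'r) \<Rightarrow> 'a set \<Rightarrow> 'r" where
  "word_act q [] X = X"
| "word_act q (a # w) X = clifford q a (word_act q w X)"

lemma word_act_append: "word_act q (u @ w) X = word_act q u (word_act q w X)"
  by (induction u) auto

lemma word_act_sum: "word_act q u (\<lambda>K. \<Sum>i\<in>A. c i * Y i K) K = (\<Sum>i\<in>A. c i * word_act q u (Y i) K)"
proof (induction u arbitrary: K)
  case (Cons a u)
  then have "word_act q u (\<lambda>K. \<Sum>i\<in>A. c i * Y i K) = (\<lambda>K. \<Sum>i\<in>A. c i * word_act q u (Y i) K)" by auto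
  then show ?case by (simp add: clifford_sum)
qed simp

lemma word_act_zero [simp]: "word_act q u (\<lambda>K. 0) = (\<lambda>K. 0)"
  using word_act_sum[of q u "\<lambda>_. 0" "\<lambda>_ _. 0" "{}"] by auto

definition basis :: "'a set \<Rightarrow> 'a set \<Rightarrow> 'r::comm_ring_1" where
  "basis J = (\<lambda>K. if K = J then 1 else 0)"

lemma word_act_sorted_supp:
  assumes "sorted_wrt (<) (w::'a::{linorder,finite} list)" and "word_act q w (basis {}) K \<noteq> 0"
  shows "K = set w \<or> card K < length w"
  using assms
proof (induction w arbitrary: K)
  case Nil
  then show ?case by (simp add: basis_def split: if_splits)
next
  case (Cons a w)
  let ?Z = "word_act q w (basis {})"
  have "sorted_wrt (<) w" using Cons.prems(1) by simp
  note low = Cons.IH[OF this]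
  have cw: "card (set w) = length w"
    using \<open>sorted_wrt (<) w\<close> by (simp add: strict_sorted_iff distinct_card)
  consider "wedge a ?Z K \<noteq> 0" | "contract ?Z K \<noteq> 0"
    using Cons.prems(2) by (force simp: clifford_def)
  then show ?case
  proof cases
    case 1
    then have "a \<in> K" and "?Z (K - {a}) \<noteq> 0" by (auto simp: wedge_def split: if_splits)
    moreover have "card K = Suc (card (K - {a}))"
      using \<open>a \<in> K\<close> by (metis card_Suc_Diff1 finite)
    ultimately show ?thesis using low[of "K - {a}"] by auto
  next
    case 2
    then obtain k where "k \<notin> K" and "?Z (insert k K) \<noteq> 0"
      unfolding contract_def by (metis (no_types, lifting) ComplD mult_zero_right sum.neutral)
    moreover have "card (insert k K) \<le> length w"
      using low[of "insert k K"] cw \<open>?Z (insert k K) \<noteq> 0\<close> by (metis order.strict_implies_order order_refl)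
    ultimately show ?thesis by simp
  qed
qed

lemma word_act_sorted_letters:
  assumes "sorted_wrt (<) (w::'a::{linorder,finite} list)"
  shows "word_act q w (basis {}) (set w) = 1"
  using assms
proof (induction w)
  case Nil
  then show ?case by (simp add: basis_def)
next
  case (Cons a w)
  let ?Z = "word_act q w (basis {})"
  have min: "\<forall>y\<in>set w. a < y" and sorted: "sorted_wrt (<) w" using Cons.prems by auto
  then have "a \<notin> set w" by auto
  have "card (set w) = length w" using sorted by (simp add: strict_sorted_iff distinct_card)
  then have "?Z (insert k (insert a (set w))) = 0" if "k \<notin> insert a (set w)" for k
    using word_act_sorted_supp[OF sorted, of q "insert k (insert a (set w))"] that \<open>a \<notin> set w\<close> by auto
  then have "contract ?Z (insert a (set w)) = 0" by (simp add: contract_def)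
  then show ?case
    using \<open>a \<notin> set w\<close> Cons.IH[OF sorted] ext_sign_min[OF min] by (simp add: clifford_def wedge_def)
qed

lemma wedge_basis:
  "wedge s (basis J) K = (if s \<in> J then 0 else (-1) ^ card {j \<in> J. j < s} * basis (insert s J) K)"
proof (cases "s \<in> J")
  case True
  then show ?thesis by (auto simp: wedge_def basis_def)
next
  case False
  show ?thesis
  proof (cases "K = insert s J")
    case True
    moreover have "{k \<in> insert s J. k < s} = {j \<in> J. j < s}" by auto
    ultimately show ?thesis using \<open>s \<notin> J\<close> by (simp add: wedge_def basis_def ext_sign_def)
  next
    case False
    then have "s \<notin> K \<or> K - {s} \<noteq> J" by auto
    with \<open>s \<notin> J\<close> False show ?thesis by (auto simp: wedge_def basis_def)
  qed
qed

section \<open>The action of the free algebra\<close>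

definition supp :: "('a, 'r::zero) falg \<Rightarrow> 'a list set" where
  "supp f = {w. f w \<noteq> 0}"

lemma finite_supp_mono [simp]: "finite (supp (Defs.mono u :: ('a, 'r::comm_ring_1) falg))"
  by (rule finite_subset[of _ "{u}"]) (auto simp: supp_def Defs.mono_def)

lemma supp_fadd: "supp (fadd f g) \<subseteq> supp f \<union> supp g"
  by (auto simp: supp_def fadd_def)

lemma supp_fsub: "supp (fsub f g) \<subseteq> supp f \<union> supp g"
  by (auto simp: supp_def fsub_def)

lemma supp_smul: "supp (smul c f) \<subseteq> supp f"
  by (auto simp: supp_def smul_def)

lemma finite_supp_fadd [simp]: "finite (supp f) \<Longrightarrow> finite (supp g) \<Longrightarrow> finite (supp (fadd f g))"
  by (rule finite_subset[OF supp_fadd]) simp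

lemma finite_supp_fsub [simp]: "finite (supp f) \<Longrightarrow> finite (supp g) \<Longrightarrow> finite (supp (fsub f g))"
  by (rule finite_subset[OF supp_fsub]) simp

lemma finite_supp_smul [simp]: "finite (supp f) \<Longrightarrow> finite (supp (smul c f))"
  by (rule finite_subset[OF supp_smul])

lemma supp_fmul: "supp (fmul f g) \<subseteq> (\<lambda>(u, v). u @ v) ` (supp f \<times> supp g)"
proof
  fix w assume "w \<in> supp (fmul f g)"
  then have "(\<Sum>i\<le>length w. f (take i w) * g (drop i w)) \<noteq> 0" by (simp add: supp_def fmul_def)
  then obtain i where "f (take i w) * g (drop i w) \<noteq> 0" by (rule sum.not_neutral_contains_not_neutral)
  then have "f (take i w) \<noteq> 0" "g (drop i w) \<noteq> 0" by auto
  then show "w \<in> (\<lambda>(u, v). u @ v) ` (supp f \<times> supp g)"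
    by (auto simp: supp_def intro!: image_eqI[of _ _ "(take i w, drop i w)"])
qed

lemma finite_supp_fmul [simp]: "finite (supp f) \<Longrightarrow> finite (supp g) \<Longrightarrow> finite (supp (fmul f g))"
  by (rule finite_subset[OF supp_fmul]) simp

lemma fmul_mono_left:
  "fmul (Defs.mono u) g w = (if take (length u) w = u then g (drop (length u) w) else 0)"
proof -
  have "fmul (Defs.mono u) g w
      = (\<Sum>i\<le>length w. if i = length u then (if take (length u) w = u then g (drop (length u) w) else 0) else 0)"
    unfolding fmul_def Defs.mono_def by (intro sum.cong refl) auto
  then show ?thesis by (cases "length u \<le> length w") auto
qed

lemma fmul_mono_right:
  "fmul f (Defs.mono v) w
    = (if length v \<le> length w \<and> drop (length w - length v) w = v then f (take (length w - length v) w) else 0)"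
proof -
  have "fmul f (Defs.mono v) w = (\<Sum>i\<le>length w. if i = length w - length v then
      (if length v \<le> length w \<and> drop (length w - length v) w = v then f (take (length w - length v) w) else 0) else 0)"
    unfolding fmul_def Defs.mono_def by (intro sum.cong refl) auto
  then show ?thesis by simp
qed

lemma fmul_mono_left_append [simp]: "fmul (Defs.mono u) g (u @ w) = g w"
  by (simp add: fmul_mono_left)

lemma fmul_mono_right_append [simp]: "fmul f (Defs.mono v) (w @ v) = f w"
  by (simp add: fmul_mono_right)

lemma supp_fmul_mono_left: "supp (fmul (Defs.mono u) g) \<subseteq> (\<lambda>w. u @ w) ` supp g"
proof
  fix w assume "w \<in> supp (fmul (Defs.mono u) g)"
  then have "take (length u) w = u" "drop (length u) w \<in> supp g"
    by (auto simp: supp_def fmul_mono_left split: if_splits)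
  then show "w \<in> (\<lambda>w. u @ w) ` supp g" by (metis append_take_drop_id image_eqI)
qed

lemma supp_fmul_mono_right: "supp (fmul f (Defs.mono v)) \<subseteq> (\<lambda>w. w @ v) ` supp f"
proof
  fix w assume "w \<in> supp (fmul f (Defs.mono v))"
  then have "drop (length w - length v) w = v" "take (length w - length v) w \<in> supp f"
    by (auto simp: supp_def fmul_mono_right split: if_splits)
  then show "w \<in> (\<lambda>w. w @ v) ` supp f" by (metis append_take_drop_id image_eqI)
qed

definition falg_act :: "'r::comm_ring_1 \<Rightarrow> ('a::{linorder,finite}, 'r) falg \<Rightarrow> ('a set \<Rightarrow> 'r) \<Rightarrow> 'a set \<Rightarrow> 'r" where
  "falg_act q f X = (\<lambda>K. \<Sum>w\<in>supp f. f w * word_act q w X K)"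

lemma falg_act_superset:
  "finite A \<Longrightarrow> supp f \<subseteq> A \<Longrightarrow> falg_act q f X K = (\<Sum>w\<in>A. f w * word_act q w X K)"
  unfolding falg_act_def by (rule sum.mono_neutral_left) (auto simp: supp_def)

lemma falg_act_mono [simp]: "falg_act q (Defs.mono u) X = word_act q u X"
  by (rule ext, subst falg_act_superset[of "{u}"]) (auto simp: supp_def Defs.mono_def)

lemma falg_act_fadd:
  assumes "finite (supp f)" "finite (supp g)"
  shows "falg_act q (fadd f g) X K = falg_act q f X K + falg_act q g X K"
proof -
  let ?A = "supp f \<union> supp g"
  have "falg_act q (fadd f g) X K = (\<Sum>w\<in>?A. (f w + g w) * word_act q w X K)"
    using assms by (subst falg_act_superset[of ?A]) (auto simp: supp_def fadd_def)
  also have "\<dots> = (\<Sum>w\<in>?A. f w * word_act q w X K) + (\<Sum>w\<in>?A. g w * word_act q w X K)"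
    by (simp add: sum.distrib distrib_right)
  also have "\<dots> = falg_act q f X K + falg_act q g X K"
    using assms by (simp add: falg_act_superset[of ?A])
  finally show ?thesis .
qed

lemma falg_act_fsub:
  assumes "finite (supp f)" "finite (supp g)"
  shows "falg_act q (fsub f g) X K = falg_act q f X K - falg_act q g X K"
proof -
  let ?A = "supp f \<union> supp g"
  have "falg_act q (fsub f g) X K = (\<Sum>w\<in>?A. (f w - g w) * word_act q w X K)"
    using assms by (subst falg_act_superset[of ?A]) (auto simp: supp_def fsub_def)
  also have "\<dots> = (\<Sum>w\<in>?A. f w * word_act q w X K) - (\<Sum>w\<in>?A. g w * word_act q w X K)"
    by (simp add: sum_subtractf left_diff_distrib)
  also have "\<dots> = falg_act q f X K - falg_act q g X K"
    using assms by (simp add: falg_act_superset[of ?A])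
  finally show ?thesis .
qed

lemma falg_act_smul:
  assumes "finite (supp f)"
  shows "falg_act q (smul c f) X K = c * falg_act q f X K"
proof -
  have "falg_act q (smul c f) X K = (\<Sum>w\<in>supp f. c * f w * word_act q w X K)"
    using assms by (subst falg_act_superset[of "supp f"]) (auto simp: supp_def smul_def)
  then show ?thesis by (simp add: falg_act_def sum_distrib_left mult.assoc)
qed

lemma falg_act_mono_mul:
  assumes "finite (supp f)"
  shows "falg_act q (fmul (Defs.mono u) f) X = word_act q u (falg_act q f X)"
proof
  fix K
  have "falg_act q (fmul (Defs.mono u) f) X K
      = (\<Sum>w\<in>(\<lambda>w. u @ w) ` supp f. fmul (Defs.mono u) f w * word_act q w X K)"
    using assms supp_fmul_mono_left by (intro falg_act_superset) auto
  also have "\<dots> = (\<Sum>w\<in>supp f. f w * word_act q u (word_act q w X) K)"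
    by (subst sum.reindex) (auto simp: inj_on_def word_act_append)
  also have "\<dots> = word_act q u (falg_act q f X) K"
    unfolding falg_act_def by (rule word_act_sum[symmetric])
  finally show "falg_act q (fmul (Defs.mono u) f) X K = word_act q u (falg_act q f X) K" .
qed

lemma falg_act_mul_mono:
  assumes "finite (supp f)"
  shows "falg_act q (fmul f (Defs.mono v)) X = falg_act q f (word_act q v X)"
proof
  fix K
  have "falg_act q (fmul f (Defs.mono v)) X K
      = (\<Sum>w\<in>(\<lambda>w. w @ v) ` supp f. fmul f (Defs.mono v) w * word_act q w X K)"
    using assms supp_fmul_mono_right by (intro falg_act_superset) auto
  also have "\<dots> = falg_act q f (word_act q v X) K"
    by (subst sum.reindex) (auto simp: inj_on_def word_act_append falg_act_def)
  finally show "falg_act q (fmul f (Defs.mono v)) X K = falg_act q f (word_act q v X) K" .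
qed

lemma fmul_gen: "fmul (gen j) f w = (if take 1 w = [j] then f (drop 1 w) else 0)"
  by (simp add: gen_def fmul_mono_left)

lemma finite_supp_gen [simp]: "finite (supp (gen s))"
  by (simp add: gen_def)

lemma falg_act_gen_mul: "finite (supp f) \<Longrightarrow> falg_act q (fmul (gen s) f) X = clifford q s (falg_act q f X)"
  by (simp add: gen_def falg_act_mono_mul)

lemma Gq_cases:
  assumes "g \<in> Gq q"
  obtains s where "g = fsub (Defs.mono [s, s]) (smul q (Defs.mono []))"
  | r s where "s < r" "g = fsub (fadd (Defs.mono [r, s]) (Defs.mono [s, r])) (smul (2 * q) (Defs.mono []))"
  using assms unfolding Gq_def by blast

lemma finite_supp_Gq: "g \<in> Gq q \<Longrightarrow> finite (supp g)"
  by (erule Gq_cases) simp_all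

lemma falg_act_Gq: "g \<in> Gq q \<Longrightarrow> falg_act q g X = (\<lambda>K. 0)"
proof (erule Gq_cases)
  fix s assume g: "g = fsub (Defs.mono [s, s]) (smul q (Defs.mono []))"
  show ?thesis unfolding g by (rule ext) (simp add: falg_act_fsub falg_act_smul clifford_square)
next
  fix r s :: 'a
  assume "s < r" and g: "g = fsub (fadd (Defs.mono [r, s]) (Defs.mono [s, r])) (smul (2 * q) (Defs.mono []))"
  show ?thesis
    unfolding g using \<open>s < r\<close> by (intro ext) (simp add: falg_act_fsub falg_act_fadd falg_act_smul clifford_anticomm)
qed

section \<open>Reduction modulo G_q\<close>

lemma red_step_Gq_falg_act:
  assumes "red_step (Gq q) f h" "finite (supp f)"
  shows "finite (supp h) \<and> falg_act q h X = falg_act q f X"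
proof -
  obtain g m u v where g: "g \<in> Gq q"
    and h: "h = fsub f (smul (f (u @ m @ v)) (fmul (fmul (Defs.mono u) g) (Defs.mono v)))"
    using assms(1) unfolding red_step_def by blast
  have fin: "finite (supp g)" using finite_supp_Gq[OF g] .
  have "falg_act q (fmul (fmul (Defs.mono u) g) (Defs.mono v)) X = (\<lambda>K. 0)"
    using fin by (simp add: falg_act_mul_mono falg_act_mono_mul falg_act_Gq[OF g])
  then show ?thesis
    using assms(2) fin by (auto simp: h falg_act_fsub falg_act_smul)
qed

lemma reduces_Gq_falg_act:
  assumes "reduces (Gq q) f h" "finite (supp f)"
  shows "finite (supp h) \<and> falg_act q h X = falg_act q f X"
  using assms unfolding reduces_def
  by (induction rule: rtranclp_induct) (auto dest: red_step_Gq_falg_act[where X=X])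

lemma deglex_less_iff_lenlex: "deglex_less v w \<longleftrightarrow> (v, w) \<in> lenlex {(a, b). a < b}"
  by (auto simp: deglex_less_def lenlex_conv lex_conv)

lemma wf_deglex: "wf {(v, w :: 'a::{linorder,finite} list). deglex_less v w}"
proof -
  have "trans {(a, b :: 'a). a < b}" by (auto simp: trans_def)
  then have "wf {(a, b :: 'a). a < b}"
    by (intro finite_acyclic_wf) (auto simp: acyclic_irrefl trancl_id irrefl_def)
  then show ?thesis by (simp add: deglex_less_iff_lenlex wf_lenlex)
qed

lemma deglex_less_append:
  assumes "deglex_less y m"
  shows "deglex_less (u @ y @ v) (u @ m @ v)"
proof -
  have "(y @ v, m @ v) \<in> lenlex {(a, b). a < b}"
    using assms by (simp add: deglex_less_iff_lenlex lenlex_append1)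
  then show ?thesis by (simp add: deglex_less_iff_lenlex irrefl_def)
qed

lemma fmul_sandwich_append [simp]: "fmul (fmul (Defs.mono u) g) (Defs.mono v) (u @ y @ v) = g y"
  by (simp flip: append_assoc)

lemma supp_fmul_sandwich:
  "supp (fmul (fmul (Defs.mono u) g) (Defs.mono v)) \<subseteq> (\<lambda>y. u @ y @ v) ` supp g"
  using supp_fmul_mono_right[of "fmul (Defs.mono u) g" v] supp_fmul_mono_left[of u g]
  by (fastforce simp: subset_iff image_iff)

lemma is_lm_square: "is_lm (fsub (Defs.mono [x, x]) (smul q (Defs.mono [])) :: ('a::linorder, 'r::comm_ring_1) falg) [x, x]"
  unfolding is_lm_def
proof (intro conjI allI impI)
  fix w assume "fsub (Defs.mono [x, x]) (smul q (Defs.mono [])) w \<noteq> (0::'r)"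
  then have "w = [x, x] \<or> w = []" by (simp add: fsub_def smul_def Defs.mono_def split: if_splits)
  then show "w = [x, x] \<or> deglex_less w [x, x]" by (auto simp: deglex_less_def)
qed (simp add: fsub_def smul_def Defs.mono_def)

lemma is_lm_anticomm:
  assumes "y < x"
  shows "is_lm (fsub (fadd (Defs.mono [x, y]) (Defs.mono [y, x])) (smul (2 * q) (Defs.mono []))
      :: ('a::linorder, 'r::comm_ring_1) falg) [x, y]"
proof -
  have "deglex_less [y, x] [x, y]"
    using assms unfolding deglex_less_def by (auto intro!: exI[of _ "[]"])
  then show ?thesis
    unfolding is_lm_def
  proof (intro conjI allI impI)
    fix w
    assume "fsub (fadd (Defs.mono [x, y]) (Defs.mono [y, x])) (smul (2 * q) (Defs.mono [])) w \<noteq> (0::'r)"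
    then have "w = [x, y] \<or> w = [y, x] \<or> w = []"
      by (simp add: fsub_def fadd_def smul_def Defs.mono_def split: if_splits)
    moreover have "deglex_less [] [x, y]" by (simp add: deglex_less_def)
    ultimately show "w = [x, y] \<or> deglex_less w [x, y]"
      using \<open>deglex_less [y, x] [x, y]\<close> by auto
  qed (use assms in \<open>simp add: fsub_def fadd_def smul_def Defs.mono_def\<close>)
qed

lemma not_sorted_wrt_less:
  assumes "\<not> sorted_wrt (<) w"
  shows "\<exists>u x y v. w = u @ x # y # v \<and> (y::'a::linorder) \<le> x"
  using assms
proof (induction w)
  case (Cons a t)
  show ?case
  proof (cases "sorted_wrt (<) t")
    case True
    then obtain z where z: "z \<in> set t" "z \<le> a" using Cons.prems by (auto simp: not_less)
    then obtain b t' where t: "t = b # t'" by (cases t) auto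
    with True z have "b \<le> a" by (auto simp: less_imp_le)
    with t show ?thesis by (intro exI[of _ "[]"]) auto
  next
    case False
    then obtain u x y v where "t = u @ x # y # v" "y \<le> x" using Cons.IH by blast
    then show ?thesis by (intro exI[of _ "a # u"]) auto
  qed
qed simp

lemma reducible_if_not_sorted:
  assumes "\<not> sorted_wrt (<) w"
  shows "\<exists>g\<in>Gq q. \<exists>m u v. is_lm g m \<and> w = u @ m @ v"
proof -
  obtain u x y v where w: "w = u @ x # y # v" and "y \<le> x"
    using not_sorted_wrt_less[OF assms] by blast
  show ?thesis
  proof (cases "x = y")
    case True
    have "fsub (Defs.mono [x, x]) (smul q (Defs.mono [])) \<in> Gq q" by (auto simp: Gq_def)
    with True w is_lm_square show ?thesis by fastforce
  next
    case False
    with \<open>y \<le> x\<close> have "y < x" by simp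
    then have "fsub (fadd (Defs.mono [x, y]) (Defs.mono [y, x])) (smul (2 * q) (Defs.mono [])) \<in> Gq q"
      by (auto simp: Gq_def)
    with w is_lm_anticomm[OF \<open>y < x\<close>] show ?thesis by fastforce
  qed
qed

lemma mult_mset_set_replace:
  assumes "finite A" "finite B" "w \<in> A - B" "\<forall>z\<in>B - A. (z, w) \<in> r"
  shows "(mset_set B, mset_set A) \<in> mult r"
proof -
  have "mset_set B = mset_set (A \<inter> B) + mset_set (B - A)"
    and "mset_set A = mset_set (A \<inter> B) + mset_set (A - B)"
    using assms(1,2) by (subst mset_set_Union[symmetric]; auto intro: arg_cong[where f = mset_set])+
  moreover have "(mset_set (A \<inter> B) + mset_set (B - A), mset_set (A \<inter> B) + mset_set (A - B)) \<in> mult r"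
    using assms by (intro one_step_implies_mult) (auto simp: mset_set_empty_iff)
  ultimately show ?thesis by simp
qed

definition sorted_support :: "('a::linorder, 'r::zero) falg \<Rightarrow> bool" where
  "sorted_support f \<longleftrightarrow> (\<forall>w\<in>supp f. sorted_wrt (<) w)"

lemma red_step_remove_unsorted:
  fixes f :: "('a::{linorder,finite}, 'r::comm_ring_1) falg"
  assumes "finite (supp f)" "w \<in> supp f" "\<not> sorted_wrt (<) w"
  obtains h where "red_step (Gq q) f h" "finite (supp h)" "h w = 0"
    "\<And>z. h z \<noteq> 0 \<Longrightarrow> f z = 0 \<Longrightarrow> deglex_less z w"
proof -
  obtain g m u v where g: "g \<in> Gq q" and lm: "is_lm g m" and wum: "w = u @ m @ v"
    using reducible_if_not_sorted[OF assms(3), of q] by blast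
  define G where "G = fmul (fmul (Defs.mono u) g) (Defs.mono v)"
  define h where "h = fsub f (smul (f w) G)"
  have "red_step (Gq q) f h"
    unfolding red_step_def h_def G_def using g lm assms(2) wum by (auto simp: supp_def)
  moreover have "finite (supp h)" using assms(1) finite_supp_Gq[OF g] by (simp add: h_def G_def)
  moreover have hw: "h w = 0" using lm by (simp add: h_def G_def wum fsub_def smul_def is_lm_def)
  moreover have "deglex_less z w" if "h z \<noteq> 0" "f z = 0" for z
  proof -
    from that have "G z \<noteq> 0" by (auto simp: h_def fsub_def smul_def)
    then obtain y where "z = u @ y @ v" "g y \<noteq> 0"
      using supp_fmul_sandwich[of u g v] by (auto simp: G_def supp_def)
    moreover have "z \<noteq> w" using that hw by auto
    ultimately show ?thesis using lm wum by (auto simp: is_lm_def intro: deglex_less_append)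
  qed
  ultimately show ?thesis using that by blast
qed

text \<open>Each step kills one unsorted word and only creates words that are smaller in the
  degree lexicographic order, so the multiset of unsorted words in the support decreases.\<close>
lemma reduces_to_sorted_support:
  fixes f :: "('a::{linorder,finite}, 'r::comm_ring_1) falg"
  assumes "finite (supp f)"
  shows "\<exists>h. reduces (Gq q) f h \<and> sorted_support h"
  using assms
proof (induction "mset_set {w\<in>supp f. \<not> sorted_wrt (<) w}" arbitrary: f
    rule: wf_induct_rule[OF wf_mult[OF wf_deglex]])
  case (1 f)
  let ?unsorted = "\<lambda>f :: ('a, 'r) falg. {w\<in>supp f. \<not> sorted_wrt (<) w}"
  show ?case
  proof (cases "?unsorted f = {}")
    case True
    then show ?thesis unfolding reduces_def sorted_support_def by blast
  next
    case False
    then obtain w where w: "w \<in> supp f" "\<not> sorted_wrt (<) w" by blast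
    obtain h where step: "red_step (Gq q) f h" and fin: "finite (supp h)" and "h w = 0"
      and new: "\<And>z. h z \<noteq> 0 \<Longrightarrow> f z = 0 \<Longrightarrow> deglex_less z w"
      using red_step_remove_unsorted[where q = q, OF "1.prems" w] by blast
    have "(mset_set (?unsorted h), mset_set (?unsorted f)) \<in> mult {(v, w). deglex_less v w}"
      using "1.prems" fin w \<open>h w = 0\<close>
      by (intro mult_mset_set_replace) (auto simp: supp_def intro: new)
    then obtain h' where "reduces (Gq q) h h'" "sorted_support h'"
      using "1.hyps" fin by blast
    with step show ?thesis
      unfolding reduces_def by (blast intro: converse_rtranclp_into_rtranclp)
  qed
qed

lemma finite_supp_if_sorted_support:
  "sorted_support (f :: ('a::{linorder,finite}, 'r::zero) falg) \<Longrightarrow> finite (supp f)"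
  unfolding sorted_support_def
  by (rule finite_subset[OF _ finite_subset_distinct[OF finite_UNIV]]) (auto simp: strict_sorted_iff)

lemma sorted_support_fadd [intro]: "sorted_support f \<Longrightarrow> sorted_support g \<Longrightarrow> sorted_support (fadd f g)"
  using supp_fadd[of f g] by (auto simp: sorted_support_def)

lemma sorted_support_fsub [intro]: "sorted_support f \<Longrightarrow> sorted_support g \<Longrightarrow> sorted_support (fsub f g)"
  using supp_fsub[of f g] by (auto simp: sorted_support_def)

lemma sorted_support_smul [intro]: "sorted_support f \<Longrightarrow> sorted_support (smul c f)"
  using supp_smul[of c f] by (auto simp: sorted_support_def)

text \<open>Evaluate at the letter set of a longest word of the support: by
  \<open>word_act_sorted_supp\<close>, only that word contributes.\<close>
lemma sorted_support_eq_0: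
  fixes f :: "('a::{linorder,finite}, 'r::comm_ring_1) falg"
  assumes "sorted_support f" and "falg_act q f (basis {}) = (\<lambda>K. 0)"
  shows "f = (\<lambda>w. 0)"
proof (rule ccontr)
  assume "f \<noteq> (\<lambda>w. 0)"
  then have ne: "supp f \<noteq> {}" by (auto simp: supp_def)
  have fin: "finite (supp f)" using finite_supp_if_sorted_support[OF assms(1)] .
  obtain w where w: "w \<in> supp f" and longest: "\<And>v. v \<in> supp f \<Longrightarrow> length v \<le> length w"
    using Max_in[of "length ` supp f"] Max_ge[of "length ` supp f"] fin ne by fastforce
  have sorted: "sorted_wrt (<) v" if "v \<in> supp f" for v
    using assms(1) that by (simp add: sorted_support_def)
  have cw: "card (set w) = length w"
    using sorted[OF w] by (simp add: strict_sorted_iff distinct_card)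
  have "word_act q v (basis {}) (set w) = 0" if v: "v \<in> supp f - {w}" for v
  proof (rule ccontr)
    assume "word_act q v (basis {}) (set w) \<noteq> 0"
    then have "set w = set v \<or> card (set w) < length v"
      using word_act_sorted_supp[OF sorted] v by blast
    moreover have "set w \<noteq> set v"
      using v sorted[of v] sorted[OF w] by (auto simp: strict_sorted_iff sorted_distinct_set_unique)
    ultimately show False using longest[of v] v cw by auto
  qed
  then have "falg_act q f (basis {}) (set w) = f w * word_act q w (basis {}) (set w)"
    unfolding falg_act_def using fin w by (simp add: sum.remove)
  also have "\<dots> = f w" using word_act_sorted_letters[OF sorted[OF w], of q] by simp
  finally show False using assms(2) w by (simp add: supp_def fun_eq_iff)
qed

lemma sorted_support_eqI:
  fixes f g :: "('a::{linorder,finite}, 'r::comm_ring_1) falg"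
  assumes "sorted_support f" "sorted_support g" "falg_act q f (basis {}) = falg_act q g (basis {})"
  shows "f = g"
proof -
  have "falg_act q (fsub f g) (basis {}) = (\<lambda>K. 0)"
    using assms by (simp add: fun_eq_iff falg_act_fsub finite_supp_if_sorted_support)
  then have "fsub f g = (\<lambda>w. 0)" using assms by (intro sorted_support_eq_0) auto
  then show ?thesis by (simp add: fun_eq_iff fsub_def)
qed

lemma reduces_Gq_if_falg_act_eq:
  fixes f h :: "('a::{linorder,finite}, 'r::comm_ring_1) falg"
  assumes "finite (supp f)" "sorted_support h" "falg_act q h (basis {}) = falg_act q f (basis {})"
  shows "reduces (Gq q) f h"
proof -
  obtain h' where h': "reduces (Gq q) f h'" "sorted_support h'"
    using reduces_to_sorted_support[OF assms(1)] by blast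
  moreover have "falg_act q h' (basis {}) = falg_act q f (basis {})"
    using reduces_Gq_falg_act[OF h'(1) assms(1)] by simp
  ultimately have "h' = h" using assms(2,3) by (intro sorted_support_eqI[where q = q]) auto
  with h' show ?thesis by simp
qed

section \<open>The elements tau\<close>

lemma sorted_list_of_set_insert_min:
  assumes "finite A" "\<forall>x\<in>A. (j::'a::linorder) < x"
  shows "sorted_list_of_set (insert j A) = j # sorted_list_of_set A"
proof -
  have "j \<notin> A" using assms(2) by auto
  then have "sorted_list_of_set (insert j A) = insort j (sorted_list_of_set A)"
    using sorted_list_of_set_insert_remove[OF assms(1), of j] by simp
  also have "\<dots> = j # sorted_list_of_set A"
    by (rule insort_is_Cons) (use assms in \<open>auto simp: less_imp_le\<close>)
  finally show ?thesis .
qed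

lemma sum_Pow_insert:
  assumes "j \<notin> A" "finite A"
  shows "(\<Sum>I\<in>Pow (insert j A). F I) = (\<Sum>I\<in>Pow A. F I) + (\<Sum>I\<in>Pow A. F (insert j I))"
proof -
  have "Pow A \<inter> insert j ` Pow A = {}" using assms(1) by auto
  moreover have "inj_on (insert j) (Pow A)" using assms(1) unfolding inj_on_def by (auto simp: insert_ident)
  ultimately show ?thesis unfolding Pow_insert using assms(2)
    by (simp add: sum.union_disjoint sum.reindex)
qed

lemma index_le_card_less_nth:
  assumes "I \<subseteq> J" "\<nu> < card I"
  shows "\<nu> \<le> card {y \<in> (J::'a::{linorder,finite} set). y < sorted_list_of_set I ! \<nu>}"
proof -
  let ?l = "sorted_list_of_set I"
  have "(!) ?l ` {..<\<nu>} \<subseteq> {y \<in> J. y < ?l ! \<nu>}"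
  proof
    fix y assume "y \<in> (!) ?l ` {..<\<nu>}"
    then obtain i where i: "i < \<nu>" "y = ?l ! i" by auto
    then have "y \<in> set ?l" using assms by (metis length_sorted_list_of_set nth_mem order.strict_trans)
    then have "y \<in> J" using assms by auto
    moreover have "y < ?l ! \<nu>"
      using sorted_wrt_nth_less[of "(<)" ?l i \<nu>] i assms by (simp add: strict_sorted_iff)
    ultimately show "y \<in> {y \<in> J. y < ?l ! \<nu>}" by simp
  qed
  moreover have "card ((!) ?l ` {..<\<nu>}) = \<nu>"
    by (subst card_image) (use assms in \<open>auto intro!: inj_on_nth\<close>)
  ultimately show ?thesis by (metis card_mono finite)
qed

lemma card_less_insert_min:
  assumes "\<forall>x\<in>J. (j::'a::{linorder,finite}) < x" "j < x"
  shows "card {y \<in> insert j J. y < x} = Suc (card {y \<in> J. y < x})"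
proof -
  have "{y \<in> insert j J. y < x} = insert j {y \<in> J. y < x}" using assms(2) by auto
  moreover have "j \<notin> {y \<in> J. y < x}" using assms(1) by auto
  ultimately show ?thesis by simp
qed

lemma ell_insert_min:
  assumes "I \<subseteq> J" "\<forall>x\<in>J. (j::'a::{linorder,finite}) < x"
  shows "ell (insert j J) I = ell J I + card I"
proof -
  have "card {y \<in> insert j J. y < sorted_list_of_set I ! \<nu>} - \<nu>
      = (card {y \<in> J. y < sorted_list_of_set I ! \<nu>} - \<nu>) + 1" if "\<nu> < card I" for \<nu>
  proof -
    have "sorted_list_of_set I ! \<nu> \<in> I"
      using that by (metis finite length_sorted_list_of_set nth_mem set_sorted_list_of_set)
    then show ?thesis
      using assms card_less_insert_min[OF assms(2)] index_le_card_less_nth[OF assms(1) that] by auto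
  qed
  then have "ell (insert j J) I = (\<Sum>\<nu><card I. (card {y \<in> J. y < sorted_list_of_set I ! \<nu>} - \<nu>) + 1)"
    unfolding ell_def by (intro sum.cong) auto
  also have "\<dots> = ell J I + (\<Sum>\<nu><card I. 1)"
    unfolding ell_def by (rule sum.distrib)
  finally show ?thesis by simp
qed

lemma ell_insert_min_insert:
  assumes "I \<subseteq> J" "\<forall>x\<in>J. (j::'a::{linorder,finite}) < x"
  shows "ell (insert j J) (insert j I) = ell J I"
proof -
  have "j \<notin> I" using assms by auto
  have sl: "sorted_list_of_set (insert j I) = j # sorted_list_of_set I"
    by (rule sorted_list_of_set_insert_min) (use assms in auto)
  have "{y \<in> insert j J. y < j} = {}" using assms(2) by auto
  moreover have "card {y \<in> insert j J. y < sorted_list_of_set I ! \<nu>} - Suc \<nu>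
      = card {y \<in> J. y < sorted_list_of_set I ! \<nu>} - \<nu>" if "\<nu> < card I" for \<nu>
  proof -
    have "sorted_list_of_set I ! \<nu> \<in> I"
      using that by (metis finite length_sorted_list_of_set nth_mem set_sorted_list_of_set)
    then show ?thesis using assms card_less_insert_min[OF assms(2)] by auto
  qed
  ultimately show ?thesis
    using \<open>j \<notin> I\<close> by (simp add: ell_def sl sum.lessThan_Suc_shift del: sum.lessThan_Suc)
qed

text \<open>Both \<open>tau_plus\<close> and \<open>tau_minus\<close> in one definition, the parity of \<open>#I\<close> being the
  parameter \<open>e\<close>; for odd \<open>n\<close> the exponent \<open>(n - 1) div 2\<close> equals \<open>n div 2\<close>.\<close>
definition tau :: "'r::comm_ring_1 \<Rightarrow> bool \<Rightarrow> 'a::{linorder,finite} set \<Rightarrow> ('a, 'r) falg" where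
  "tau q e J = (\<lambda>w. \<Sum>I\<in>Pow J. if even (card I) = e
      then (-1) ^ ell J I * (-q) ^ (card I div 2) * tset (J - I) w else 0)"

lemma tau_plus_eq_tau: "tau_plus q J = tau q True J"
proof -
  have "{I. I \<subseteq> J \<and> even (card I)} = {I \<in> Pow J. even (card I)}" by auto
  then show ?thesis
    unfolding tau_plus_def tau_def by (simp only: sum.inter_filter[OF finite] simp_thms)
qed

lemma tau_minus_eq_tau: "tau_minus q J = tau q False J"
proof -
  have "{I. I \<subseteq> J \<and> odd (card I)} = {I \<in> Pow J. odd (card I)}" by auto
  moreover have "(n - 1) div 2 = n div 2" if "odd n" for n :: nat using that by (elim oddE) simp
  ultimately show ?thesis
    unfolding tau_minus_def tau_def by (simp only: sum.inter_filter[OF finite] simp_thms) (auto intro!: sum.cong)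
qed

lemma tset_insert_min_diff:
  assumes "\<forall>x\<in>J. (j::'a::{linorder,finite}) < x" "I \<subseteq> J"
  shows "tset (insert j J - I) w = (if take 1 w = [j] then tset (J - I) (drop 1 w) else (0::'r::comm_ring_1))"
proof -
  have "insert j J - I = insert j (J - I)" using assms by auto
  moreover have "sorted_list_of_set (insert j (J - I)) = j # sorted_list_of_set (J - I)"
    by (rule sorted_list_of_set_insert_min) (use assms in auto)
  ultimately show ?thesis by (cases w) (auto simp: tset_def Defs.mono_def)
qed

text \<open>Split the subsets \<open>I\<close> of \<open>{j} \<union> J\<close> according to whether they contain the
  minimum \<open>j\<close>.\<close>
lemma tau_insert_min:
  fixes q :: "'r::comm_ring_1"
  assumes "\<forall>x\<in>J. (j::'a::{linorder,finite}) < x"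
  shows "tau q e (insert j J) w
    = (if e then 1 else -1) * fmul (gen j) (tau q e J) w + (if e then -q else 1) * tau q (\<not> e) J w"
proof -
  have "j \<notin> J" using assms by auto
  define F where "F I = (if even (card I) = e
      then (-1) ^ ell (insert j J) I * (-q) ^ (card I div 2) * tset (insert j J - I) w else 0)" for I
  have "tau q e (insert j J) w = (\<Sum>I\<in>Pow J. F I) + (\<Sum>I\<in>Pow J. F (insert j I))"
    unfolding tau_def F_def by (rule sum_Pow_insert[OF \<open>j \<notin> J\<close> finite])
  also have "(\<Sum>I\<in>Pow J. F I) = (if e then 1 else -1) * fmul (gen j) (tau q e J) w"
  proof -
    have "F I = (if e then 1 else -1) * (if take 1 w = [j] then (if even (card I) = e
        then (-1) ^ ell J I * (-q) ^ (card I div 2) * tset (J - I) (drop 1 w) else 0) else 0)"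
      if "I \<in> Pow J" for I
      using that tset_insert_min_diff[OF assms, of I w, where 'r='r] ell_insert_min[of I J j] assms
      by (auto simp: F_def power_add)
    then have "(\<Sum>I\<in>Pow J. F I) = (if e then 1 else -1) * (\<Sum>I\<in>Pow J. if take 1 w = [j] then
        (if even (card I) = e then (-1) ^ ell J I * (-q) ^ (card I div 2) * tset (J - I) (drop 1 w) else 0) else 0)"
      unfolding sum_distrib_left by (intro sum.cong) auto
    then show ?thesis by (simp add: fmul_gen tau_def)
  qed
  also have "(\<Sum>I\<in>Pow J. F (insert j I)) = (if e then -q else 1) * tau q (\<not> e) J w"
  proof -
    have "F (insert j I) = (if e then -q else 1) * (if even (card I) = (\<not> e)
        then (-1) ^ ell J I * (-q) ^ (card I div 2) * tset (J - I) w else 0)"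
      if "I \<in> Pow J" for I
    proof -
      have "j \<notin> I" and "insert j J - insert j I = J - I" using that \<open>j \<notin> J\<close> by auto
      moreover have "Suc n div 2 = (if even n then n div 2 else Suc (n div 2))" for n :: nat
        by (cases "even n") (auto elim: oddE)
      ultimately show ?thesis
        using that ell_insert_min_insert[of I J j] assms by (auto simp: F_def)
    qed
    then show ?thesis unfolding tau_def sum_distrib_left by (intro sum.cong) auto
  qed
  finally show ?thesis .
qed

lemma sorted_support_tau [intro]: "sorted_support (tau (q::'r::comm_ring_1) e J)"
  unfolding sorted_support_def supp_def
proof (intro ballI, clarify)
  fix w assume "tau q e J w \<noteq> 0"
  then obtain I where "(if even (card I) = e
      then (-1) ^ ell J I * (-q) ^ (card I div 2) * tset (J - I) w else 0) \<noteq> 0"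
    unfolding tau_def by (rule sum.not_neutral_contains_not_neutral)
  then have "(tset (J - I) w :: 'r) \<noteq> 0" by (auto split: if_splits)
  then have "w = sorted_list_of_set (J - I)" by (simp add: tset_def Defs.mono_def split: if_splits)
  then show "sorted_wrt (<) w" by simp
qed

lemma finite_supp_tau [simp]: "finite (supp (tau q e J))"
  by (rule finite_supp_if_sorted_support[OF sorted_support_tau])

lemma falg_act_tau:
  fixes q :: "'r::comm_ring_1" and J :: "'a::{linorder,finite} set"
  shows "falg_act q (tau q e J) (basis {}) = (if e then basis J else contract (basis J))"
proof (induction J arbitrary: e rule: finite_linorder_min_induct[OF finite])
  case 1
  have "tau q e ({} :: 'a set) = (if e then Defs.mono [] else (\<lambda>w. 0))"
    by (auto simp: tau_def ell_def tset_def)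
  moreover have "falg_act q (\<lambda>w. 0) (basis {}) = (\<lambda>K :: 'a set. 0)" by (simp add: falg_act_def supp_def)
  moreover have "contract (basis ({} :: 'a set)) = (\<lambda>K. 0 :: 'r)" by (simp add: fun_eq_iff contract_def basis_def)
  ultimately show ?case by (cases e) simp_all
next
  case (2 j J)
  have "tau q e (insert j J) = fadd (smul (if e then 1 else -1) (fmul (gen j) (tau q e J)))
      (smul (if e then -q else 1) (tau q (\<not> e) J))"
    by (rule ext) (simp add: tau_insert_min[OF "2.hyps"(2), of q] fadd_def smul_def)
  then have act: "falg_act q (tau q e (insert j J)) (basis {}) K
      = (if e then 1 else -1) * clifford q j (falg_act q (tau q e J) (basis {})) K
        + (if e then -q else 1) * falg_act q (tau q (\<not> e) J) (basis {}) K" for K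
    by (simp add: falg_act_fadd falg_act_smul falg_act_gen_mul)
  have "j \<notin> J" and "{x \<in> J. x < j} = {}" using "2.hyps"(2) by auto
  then have wedge: "wedge j (basis J) = basis (insert j J)"
    by (simp add: fun_eq_iff wedge_basis del: Collect_empty_eq)
  show ?case
  proof (cases e)
    case True
    show ?thesis unfolding fun_eq_iff act using True by (simp add: "2.IH" clifford_def wedge)
  next
    case False
    show ?thesis unfolding fun_eq_iff act using False by (simp add: "2.IH" clifford_contract wedge)
  qed
qed

lemma reduces_gen_tau_mem:
  fixes q :: "'r::comm_ring_1" and J :: "'a::{linorder,finite} set"
  assumes "s \<in> J"
  shows "reduces (Gq q) (fmul (gen s) (tau q True J)) (smul q (tau q False J))"
    and "reduces (Gq q) (fmul (gen s) (tau q False J)) (tau q True J)"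
proof -
  have wedge: "wedge s (basis J) = (\<lambda>K. 0 :: 'r)"
    using assms by (simp add: fun_eq_iff wedge_basis)
  have contract_0: "contract (\<lambda>K. 0 :: 'r) = (\<lambda>K :: 'a set. 0)" by (simp add: fun_eq_iff contract_def)
  show "reduces (Gq q) (fmul (gen s) (tau q True J)) (smul q (tau q False J))"
    by (rule reduces_Gq_if_falg_act_eq)
      (auto simp: fun_eq_iff falg_act_smul falg_act_gen_mul falg_act_tau clifford_def wedge)
  show "reduces (Gq q) (fmul (gen s) (tau q False J)) (tau q True J)"
    by (rule reduces_Gq_if_falg_act_eq)
      (auto simp: fun_eq_iff falg_act_gen_mul falg_act_tau clifford_contract wedge contract_0)
qed

lemma reduces_gen_tau_not_mem:
  fixes q :: "'r::comm_ring_1" and J :: "'a::{linorder,finite} set"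
  assumes "s \<notin> J"
  defines "c \<equiv> (-1) ^ card {j \<in> J. j < s}"
  shows "reduces (Gq q) (fmul (gen s) (tau q True J))
      (fadd (smul c (tau q True (insert s J))) (smul q (tau q False J)))"
    and "reduces (Gq q) (fmul (gen s) (tau q False J))
      (fadd (smul (- c) (tau q False (insert s J))) (tau q True J))"
proof -
  have wedge: "wedge s (basis J) = (\<lambda>K. c * basis (insert s J) K)"
    using assms by (simp add: fun_eq_iff wedge_basis)
  show "reduces (Gq q) (fmul (gen s) (tau q True J))
      (fadd (smul c (tau q True (insert s J))) (smul q (tau q False J)))"
    by (rule reduces_Gq_if_falg_act_eq)
      (auto simp: fun_eq_iff falg_act_fadd falg_act_smul falg_act_gen_mul falg_act_tau clifford_def wedge)
  show "reduces (Gq q) (fmul (gen s) (tau q False J))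
      (fadd (smul (- c) (tau q False (insert s J))) (tau q True J))"
    by (rule reduces_Gq_if_falg_act_eq)
      (auto simp: fun_eq_iff falg_act_fadd falg_act_smul falg_act_gen_mul falg_act_tau
        clifford_contract wedge contract_smult)
qed

theorem lemma3p5:
  fixes J :: "'a::{linorder,finite} set" and s :: 'a and q :: "'r::comm_ring_1"
  shows "(s \<in> J \<longrightarrow>
            reduces (Gq q) (fmul (gen s) (tau_plus q J)) (smul q (tau_minus q J)) \<and>
            reduces (Gq q) (fmul (gen s) (tau_minus q J)) (tau_plus q J))
       \<and> (s \<notin> J \<longrightarrow>
            (let J' = {j \<in> J. j < s} in
             reduces (Gq q) (fmul (gen s) (tau_plus q J))
               (fadd (smul ((-1) ^ card J') (tau_plus q (insert s J))) (smul q (tau_minus q J))) \<and>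
             reduces (Gq q) (fmul (gen s) (tau_minus q J))
               (fadd (smul (- ((-1) ^ card J')) (tau_minus q (insert s J))) (tau_plus q J))))"
  using reduces_gen_tau_mem[of s J q] reduces_gen_tau_not_mem[of s J q]
  by (simp add: tau_plus_eq_tau tau_minus_eq_tau)

end
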